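(* $\mathrm{L\text{-}ESO}_{d[0,1]}[=,\mathrm{SUM}]\equiv_{\mathbb R}\mathrm{L\text{-}ESO}_{d[0,1]}[=,\mathrm{SUM},0,1]$. The same equivalence holds when both logics are restricted to almost conjunctive $\ddot\exists^*\forall^*$-formulae.
   Context: Conventions on structures and $\mathrm{ESO}_{\mathbb R}$. Let $\tau$ be a finite relational vocabulary and $\sigma$ a finite functional vocabulary. An $\mathbb R$-structure of vocabulary $\tau\cup\sigma$ is a tuple $\mathfrak A=(A,\mathbb R,(R^{\mathfrak A})_{R\in\tau},(g^{\mathfrak A})_{g\in\sigma})$ where $A$ is a finite set with at least two elements, each $R^{\mathfrak A}\subseteq A^{\mathrm{ar}(R)}$ and each $g^{\mathfrak A}\colon A^{\mathrm{ar}(g)}\to\mathbb R$. For $S\subseteq\mathbb R$, $\mathfrak A$ is an $S$-structure if every $g^{\mathfrak A}$ takes values in $S$, and a $d[0,1]$-structure if every $g^{\mathfrak A}$ is a probability distribution on $A^{\mathrm{ar}(g)}$. If $\sigma=\emptyset$, $\mathfrak A$ is a finite structure. Numerical terms are built by $i::=c\mid f(\vec x)\mid i+i\mid i\times i\mid \mathrm{SUM}_{\vec y}\,i$, where $c\in\mathbb R$ is a constant, $f$ is a function symbol or function variable, and $\vec x,\vec y$ are tuples of first-order variables; under an assignment $s$, $f(\vec x)$ denotes $f^{\mathfrak A}(s(\vec x))$, $+,\times$ are real addition and multiplication, and $\mathrm{SUM}_{\vec y}\,i$ denotes $\sum_{\vec a\in A^{|\vec y|}}[i]_{s[\vec a/\vec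 y]}$ (the variables $\vec y$ become bound). For $O\subseteq\{+,\times,\mathrm{SUM}\}$, $E\subseteq\{=,<,\le\}$, $C\subseteq\mathbb R$, the formulae of $\mathrm{ESO}_{\mathbb R}[O,E,C]$ are given by $\phi::= x=y\mid\neg x=y\mid i\,e\,j\mid\neg\, i\,e\,j\mid R(\vec x)\mid\neg R(\vec x)\mid\phi\wedge\phi\mid\phi\vee\phi\mid\exists x\phi\mid\forall x\phi\mid\exists f\phi$, where $i,j$ are numerical terms using only operations in $O$ and constants in $C$, $e\in E$, $R\in\tau$, and $f$ is a function variable. Semantics is Tarskian: first-order variables range over $A$ and $\exists f$ ranges over all functions $A^{\mathrm{ar}(f)}\to\mathbb R$. For $S\subseteq\mathbb R$, $\mathrm{ESO}_S[O,E,C]$ has the same syntax but $\exists f$ ranges over functions $A^{\mathrm{ar}(f)}\to S$; in $\mathrm{ESO}_{d[0,1]}[O,E,C]$, $\exists f$ ranges over probability distributions on $A^{\mathrm{ar}(f)}$. Free function variables are interpreted like symbols of $\sigma$. We list the elements of $O,E,C$ together in brackets, e.g. $\mathrm{ESO}_{\mathbb R}[\le,+,\mathrm{SUM},0,1]$ means $O=\{+,\mathrm{SUM}\}$, $E=\{\le\}$, $C=\{0,1\}$. Fragments. The loose fragment $\mathrm{L\text{-}ESO}_S[O,E,C]$ of $\mathrm{ESO}_S[O,E,C]$ ($S$ a set of reals or $d[0,1]$) consists of the formulae containing no negated numerical atom $\neg\, i\,e\,j$. A formula is almost conjunctive if for every subformula $(\psi_1\vee\psi_2)$, at least one of $\psi_1,\psi_2$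 contains no numerical term. For a regular expression $L$ over $\{\ddot\exists,\exists,\forall\}$, the $L$-formulae of a logic are those in prenex form whose quantifier prefix belongs to $L$, where $\ddot\exists$ stands for an existential function quantifier and $\exists,\forall$ for first-order quantifiers (e.g. $\ddot\exists^*\forall^*$). Expressivity. For a formula $\phi$ and $X\subseteq\mathbb R$ or $X=d[0,1]$, $\mathrm{Struc}_X(\phi)$ is the class of pairs $(\mathfrak A,s)$ with $\mathfrak A$ an $X$-structure and $s$ an assignment of the free first-order variables such that $\mathfrak A\models_s\phi$. For logics $\mathcal L,\mathcal L'$, $\mathcal L\le_X\mathcal L'$ means every $\phi\in\mathcal L$ has some $\psi\in\mathcal L'$ with $\mathrm{Struc}_X(\phi)=\mathrm{Struc}_X(\psi)$; $\equiv_X$ means $\le_X$ in both directions. *)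

theory Defs
  imports Main "HOL.Real"
begin

text \<open>Elements of structures are natural numbers: every finite
structure is isomorphic to one whose universe is a finite set of naturals.\<close>

type_synonym var = nat

datatype cmp = CEq | CLt | CLe

datatype op = OPlus | OTimes | OSum

datatype nterm =
    Const real
  | FApp nat "var list"
  | Plus nterm nterm
  | Times nterm nterm
  | Sum "var list" nterm

datatype formula =
    Eq var var
  | NEq var var
  | NumAt cmp nterm nterm
  | NegNumAt cmp nterm nterm
  | Rel nat "var list"
  | NRel nat "var list"
  | And formula formula
  | Or formula formula
  | Ex var formula
  | All var formula
  | ExF nat nat formula  \<comment> \<open>\<open>ExF f k \<phi>\<close>: exists function variable f of arity k\<close>

record struc =
  univ :: "nat set"
  rel :: "nat \<Rightarrow> nat list set"
  fn :: "nat \<Rightarrow> nat list \<Rightarrow> real"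

definition tuples :: "nat set \<Rightarrow> nat \<Rightarrow> nat list set" where
  "tuples A n = {as. length as = n \<and> set as \<subseteq> A}"

text \<open>A vocabulary: arities of relation symbols and of function symbols
(\<open>None\<close> = not in the vocabulary).\<close>
type_synonym vocab = "(nat \<Rightarrow> nat option) \<times> (nat \<Rightarrow> nat option)"

definition finite_vocab :: "vocab \<Rightarrow> bool" where
  "finite_vocab V \<longleftrightarrow> finite (dom (fst V)) \<and> finite (dom (snd V))"

text \<open>\<open>\<real>\<close>-structures of a vocabulary, in canonical representation (relations and
functions are given exactly on the appropriate tuples; everything else is empty / 0).\<close>
definition is_struc :: "vocab \<Rightarrow> struc \<Rightarrow> bool" where
  "is_struc V S \<longleftrightarrow>
     finite (univ S) \<and> card (univ S) \<ge> 2 \<and>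
     (\<forall>R. case fst V R of
            None \<Rightarrow> rel S R = {}
          | Some k \<Rightarrow> rel S R \<subseteq> tuples (univ S) k) \<and>
     (\<forall>f. case snd V f of
            None \<Rightarrow> fn S f = (\<lambda>_. 0)
          | Some k \<Rightarrow> (\<forall>v. v \<notin> tuples (univ S) k \<longrightarrow> fn S f v = 0))"

definition upd :: "(var \<Rightarrow> nat) \<Rightarrow> var list \<Rightarrow> nat list \<Rightarrow> var \<Rightarrow> nat" where
  "upd s ys as = (\<lambda>x. case map_of (zip ys as) x of Some a \<Rightarrow> a | None \<Rightarrow> s x)"

primrec teval :: "nat set \<Rightarrow> (nat \<Rightarrow> nat list \<Rightarrow> real) \<Rightarrow> (var \<Rightarrow> nat) \<Rightarrow> nterm \<Rightarrow> real" where
  "teval A F s (Const c) = c"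
| "teval A F s (FApp f xs) = F f (map s xs)"
| "teval A F s (Plus i j) = teval A F s i + teval A F s j"
| "teval A F s (Times i j) = teval A F s i * teval A F s j"
| "teval A F s (Sum ys i) = (\<Sum>as\<in>tuples A (length ys). teval A F (upd s ys as) i)"

fun cmp_sem :: "cmp \<Rightarrow> real \<Rightarrow> real \<Rightarrow> bool" where
  "cmp_sem CEq a b = (a = b)"
| "cmp_sem CLt a b = (a < b)"
| "cmp_sem CLe a b = (a \<le> b)"

definition is_distr :: "nat set \<Rightarrow> nat \<Rightarrow> (nat list \<Rightarrow> real) \<Rightarrow> bool" where
  "is_distr A k g \<longleftrightarrow>
     (\<forall>v\<in>tuples A k. g v \<ge> 0) \<and> (\<Sum>v\<in>tuples A k. g v) = 1 \<and>
     (\<forall>v. v \<notin> tuples A k \<longrightarrow> g v = 0)"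

primrec sat_d :: "struc \<Rightarrow> (var \<Rightarrow> nat) \<Rightarrow> formula \<Rightarrow> bool" where
  "sat_d S s (Eq x y) = (s x = s y)"
| "sat_d S s (NEq x y) = (s x \<noteq> s y)"
| "sat_d S s (NumAt c i j) = cmp_sem c (teval (univ S) (fn S) s i) (teval (univ S) (fn S) s j)"
| "sat_d S s (NegNumAt c i j) = (\<not> cmp_sem c (teval (univ S) (fn S) s i) (teval (univ S) (fn S) s j))"
| "sat_d S s (Rel R xs) = (map s xs \<in> rel S R)"
| "sat_d S s (NRel R xs) = (map s xs \<notin> rel S R)"
| "sat_d S s (And \<phi> \<psi>) = (sat_d S s \<phi> \<and> sat_d S s \<psi>)"
| "sat_d S s (Or \<phi> \<psi>) = (sat_d S s \<phi> \<or> sat_d S s \<psi>)"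
| "sat_d S s (Ex x \<phi>) = (\<exists>a\<in>univ S. sat_d S (s(x := a)) \<phi>)"
| "sat_d S s (All x \<phi>) = (\<forall>a\<in>univ S. sat_d S (s(x := a)) \<phi>)"
| "sat_d S s (ExF f k \<phi>) =
     (\<exists>g. is_distr (univ S) k g \<and> sat_d (S\<lparr>fn := (fn S)(f := g)\<rparr>) s \<phi>)"

primrec wf_term :: "(nat \<Rightarrow> nat option) \<Rightarrow> nterm \<Rightarrow> bool" where
  "wf_term ar (Const c) = True"
| "wf_term ar (FApp f xs) = (ar f = Some (length xs))"
| "wf_term ar (Plus i j) = (wf_term ar i \<and> wf_term ar j)"
| "wf_term ar (Times i j) = (wf_term ar i \<and> wf_term ar j)"
| "wf_term ar (Sum ys i) = (distinct ys \<and> wf_term ar i)"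

primrec wf_form :: "(nat \<Rightarrow> nat option) \<Rightarrow> (nat \<Rightarrow> nat option) \<Rightarrow> formula \<Rightarrow> bool" where
  "wf_form rv ar (Eq x y) = True"
| "wf_form rv ar (NEq x y) = True"
| "wf_form rv ar (NumAt c i j) = (wf_term ar i \<and> wf_term ar j)"
| "wf_form rv ar (NegNumAt c i j) = (wf_term ar i \<and> wf_term ar j)"
| "wf_form rv ar (Rel R xs) = (rv R = Some (length xs))"
| "wf_form rv ar (NRel R xs) = (rv R = Some (length xs))"
| "wf_form rv ar (And \<phi> \<psi>) = (wf_form rv ar \<phi> \<and> wf_form rv ar \<psi>)"
| "wf_form rv ar (Or \<phi> \<psi>) = (wf_form rv ar \<phi> \<and> wf_form rv ar \<psi>)"
| "wf_form rv ar (Ex x \<phi>) = wf_form rv ar \<phi>"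
| "wf_form rv ar (All x \<phi>) = wf_form rv ar \<phi>"
| "wf_form rv ar (ExF f k \<phi>) = wf_form rv (ar(f := Some k)) \<phi>"

definition wf :: "vocab \<Rightarrow> formula \<Rightarrow> bool" where
  "wf V \<phi> = wf_form (fst V) (snd V) \<phi>"

primrec term_in :: "op set \<Rightarrow> real set \<Rightarrow> nterm \<Rightarrow> bool" where
  "term_in Ops C (Const c) = (c \<in> C)"
| "term_in Ops C (FApp f xs) = True"
| "term_in Ops C (Plus i j) = (OPlus \<in> Ops \<and> term_in Ops C i \<and> term_in Ops C j)"
| "term_in Ops C (Times i j) = (OTimes \<in> Ops \<and> term_in Ops C i \<and> term_in Ops C j)"
| "term_in Ops C (Sum ys i) = (OSum \<in> Ops \<and> term_in Ops C i)"

primrec in_ESO :: "op set \<Rightarrow> cmp set \<Rightarrow> real set \<Rightarrow> formula \<Rightarrow> bool" where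
  "in_ESO Ops E C (Eq x y) = True"
| "in_ESO Ops E C (NEq x y) = True"
| "in_ESO Ops E C (NumAt c i j) = (c \<in> E \<and> term_in Ops C i \<and> term_in Ops C j)"
| "in_ESO Ops E C (NegNumAt c i j) = (c \<in> E \<and> term_in Ops C i \<and> term_in Ops C j)"
| "in_ESO Ops E C (Rel R xs) = True"
| "in_ESO Ops E C (NRel R xs) = True"
| "in_ESO Ops E C (And \<phi> \<psi>) = (in_ESO Ops E C \<phi> \<and> in_ESO Ops E C \<psi>)"
| "in_ESO Ops E C (Or \<phi> \<psi>) = (in_ESO Ops E C \<phi> \<and> in_ESO Ops E C \<psi>)"
| "in_ESO Ops E C (Ex x \<phi>) = in_ESO Ops E C \<phi>"
| "in_ESO Ops E C (All x \<phi>) = in_ESO Ops E C \<phi>"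
| "in_ESO Ops E C (ExF f k \<phi>) = in_ESO Ops E C \<phi>"

primrec loose :: "formula \<Rightarrow> bool" where
  "loose (Eq x y) = True"
| "loose (NEq x y) = True"
| "loose (NumAt c i j) = True"
| "loose (NegNumAt c i j) = False"
| "loose (Rel R xs) = True"
| "loose (NRel R xs) = True"
| "loose (And \<phi> \<psi>) = (loose \<phi> \<and> loose \<psi>)"
| "loose (Or \<phi> \<psi>) = (loose \<phi> \<and> loose \<psi>)"
| "loose (Ex x \<phi>) = loose \<phi>"
| "loose (All x \<phi>) = loose \<phi>"
| "loose (ExF f k \<phi>) = loose \<phi>"

primrec has_num :: "formula \<Rightarrow> bool" where
  "has_num (Eq x y) = False"
| "has_num (NEq x y) = False"
| "has_num (NumAt c i j) = True"
| "has_num (NegNumAt c i j) = True"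
| "has_num (Rel R xs) = False"
| "has_num (NRel R xs) = False"
| "has_num (And \<phi> \<psi>) = (has_num \<phi> \<or> has_num \<psi>)"
| "has_num (Or \<phi> \<psi>) = (has_num \<phi> \<or> has_num \<psi>)"
| "has_num (Ex x \<phi>) = has_num \<phi>"
| "has_num (All x \<phi>) = has_num \<phi>"
| "has_num (ExF f k \<phi>) = has_num \<phi>"

primrec almost_conj :: "formula \<Rightarrow> bool" where
  "almost_conj (Eq x y) = True"
| "almost_conj (NEq x y) = True"
| "almost_conj (NumAt c i j) = True"
| "almost_conj (NegNumAt c i j) = True"
| "almost_conj (Rel R xs) = True"
| "almost_conj (NRel R xs) = True"
| "almost_conj (And \<phi> \<psi>) = (almost_conj \<phi> \<and> almost_conj \<psi>)"
| "almost_conj (Or \<phi> \<psi>) = ((\<not> has_num \<phi> \<or> \<not> has_num \<psi>) \<and> almost_conj \<phi> \<and> almost_conj \<psi>)"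
| "almost_conj (Ex x \<phi>) = almost_conj \<phi>"
| "almost_conj (All x \<phi>) = almost_conj \<phi>"
| "almost_conj (ExF f k \<phi>) = almost_conj \<phi>"

primrec qfree :: "formula \<Rightarrow> bool" where
  "qfree (Eq x y) = True"
| "qfree (NEq x y) = True"
| "qfree (NumAt c i j) = True"
| "qfree (NegNumAt c i j) = True"
| "qfree (Rel R xs) = True"
| "qfree (NRel R xs) = True"
| "qfree (And \<phi> \<psi>) = (qfree \<phi> \<and> qfree \<psi>)"
| "qfree (Or \<phi> \<psi>) = (qfree \<phi> \<and> qfree \<psi>)"
| "qfree (Ex x \<phi>) = False"
| "qfree (All x \<phi>) = False"
| "qfree (ExF f k \<phi>) = False"

text \<open>Prenex with quantifier prefix in \<open>\<forall>*\<close>, resp. \<open>\<ddot>\<exists>*\<forall>*\<close>.\<close>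
fun univ_prenex :: "formula \<Rightarrow> bool" where
  "univ_prenex (All x \<phi>) = univ_prenex \<phi>"
| "univ_prenex \<phi> = qfree \<phi>"

fun ef_univ_prenex :: "formula \<Rightarrow> bool" where
  "ef_univ_prenex (ExF f k \<phi>) = ef_univ_prenex \<phi>"
| "ef_univ_prenex \<phi> = univ_prenex \<phi>"

text \<open>\<open>Struc_\<real>(\<phi>)\<close>: pairs (structure, assignment) satisfying \<phi>. Assignments are total
maps into the universe; only the values on free variables matter.\<close>
definition Struc_R :: "vocab \<Rightarrow> formula \<Rightarrow> (struc \<times> (var \<Rightarrow> nat)) set" where
  "Struc_R V \<phi> = {(S, s). is_struc V S \<and> (\<forall>x. s x \<in> univ S) \<and> sat_d S s \<phi>}"

definition leq_R :: "(formula \<Rightarrow> bool) \<Rightarrow> (formula \<Rightarrow> bool) \<Rightarrow> bool" where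
  "leq_R L L' \<longleftrightarrow>
     (\<forall>V \<phi>. finite_vocab V \<and> wf V \<phi> \<and> L \<phi> \<longrightarrow>
        (\<exists>\<psi>. wf V \<psi> \<and> L' \<psi> \<and> Struc_R V \<phi> = Struc_R V \<psi>))"

definition equiv_R :: "(formula \<Rightarrow> bool) \<Rightarrow> (formula \<Rightarrow> bool) \<Rightarrow> bool" where
  "equiv_R L L' \<longleftrightarrow> leq_R L L' \<and> leq_R L' L"

definition L_ESO_d :: "op set \<Rightarrow> cmp set \<Rightarrow> real set \<Rightarrow> formula \<Rightarrow> bool" where
  "L_ESO_d Ops E C \<phi> \<longleftrightarrow> in_ESO Ops E C \<phi> \<and> loose \<phi>"

end

theory Submission
  imports Defs
begin

text \<open>Constants can be eliminated with the help of one fresh unary distribution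
variable \<open>f\<close>: since \<open>f\<close> sums to 1, the term \<open>SUM\<^sub>y f(y)\<close> denotes the constant 1.
The constant 0 cannot be obtained this way, but in a loose formula it only occurs in
atoms \<open>t = 0\<close> (a SUM-term all of whose leaves are 0 is identically 0), and over
universes with at least two elements \<open>t = 0\<close> is equivalent to \<open>SUM\<^sub>y t = t\<close> for a
variable \<open>y\<close> not occurring in \<open>t\<close>, because the left-hand side is \<open>|A| \<cdot> t\<close>.
Quantifying \<open>f\<close> existentially does not change the meaning, as distributions exist.\<close>

primrec term_vars :: "nterm \<Rightarrow> var set" where
  "term_vars (Const c) = {}"
| "term_vars (FApp g xs) = set xs"
| "term_vars (Plus i j) = term_vars i \<union> term_vars j"
| "term_vars (Times i j) = term_vars i \<union> term_vars j"
| "term_vars (Sum ys t) = set ys \<union> term_vars t"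

primrec term_funs :: "nterm \<Rightarrow> nat set" where
  "term_funs (Const c) = {}"
| "term_funs (FApp g xs) = {g}"
| "term_funs (Plus i j) = term_funs i \<union> term_funs j"
| "term_funs (Times i j) = term_funs i \<union> term_funs j"
| "term_funs (Sum ys t) = term_funs t"

primrec form_funs :: "formula \<Rightarrow> nat set" where
  "form_funs (Eq x y) = {}"
| "form_funs (NEq x y) = {}"
| "form_funs (NumAt c i j) = term_funs i \<union> term_funs j"
| "form_funs (NegNumAt c i j) = term_funs i \<union> term_funs j"
| "form_funs (Rel R xs) = {}"
| "form_funs (NRel R xs) = {}"
| "form_funs (And \<phi> \<psi>) = form_funs \<phi> \<union> form_funs \<psi>"
| "form_funs (Or \<phi> \<psi>) = form_funs \<phi> \<union> form_funs \<psi>"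
| "form_funs (Ex x \<phi>) = form_funs \<phi>"
| "form_funs (All x \<phi>) = form_funs \<phi>"
| "form_funs (ExF f k \<phi>) = insert f (form_funs \<phi>)"

lemma finite_term_vars: "finite (term_vars t)"
  by (induction t) auto

lemma finite_term_funs: "finite (term_funs t)"
  by (induction t) auto

lemma finite_form_funs: "finite (form_funs \<phi>)"
  by (induction \<phi>) (auto simp: finite_term_funs)

definition fresh :: "nat set \<Rightarrow> nat" where
  "fresh X = Suc (Max (insert 0 X))"

lemma fresh_notin: "finite X \<Longrightarrow> fresh X \<notin> X"
  unfolding fresh_def using Max_ge[of "insert 0 X"] by fastforce

lemma tuples_Suc_0: "tuples A (Suc 0) = (\<lambda>a. [a]) ` A"
  unfolding tuples_def by (auto simp: length_Suc_conv)

lemma card_tuples: "finite A \<Longrightarrow> card (tuples A k) = card A ^ k"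
  unfolding tuples_def using card_lists_length_eq[of A k] by (simp add: conj_commute)

lemma sum_tuples_Suc_0: "(\<Sum>as\<in>tuples A (Suc 0). g as) = (\<Sum>a\<in>A. g [a])"
  unfolding tuples_Suc_0 by (rule sum.reindex_cong[where l = "\<lambda>a. [a]"]) (auto intro: inj_onI)

lemma upd_singleton: "upd s [y] [a] = s(y := a)"
  by (auto simp: upd_def)

lemma is_distr_exists:
  assumes "finite A" "A \<noteq> {}"
  shows "\<exists>g. is_distr A k g"
proof -
  define n where "n = card (tuples A k)"
  have "n > 0" using assms by (simp add: n_def card_tuples card_gt_0_iff)
  then have "is_distr A k (\<lambda>v. if v \<in> tuples A k then 1 / real n else 0)"
    by (simp add: is_distr_def flip: n_def)
  then show ?thesis by blast
qed

lemma teval_cong_funs: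
  "\<forall>h\<in>term_funs t. F h = F' h \<Longrightarrow> teval A F s t = teval A F' s t"
  by (induction t arbitrary: s) auto

lemma sat_d_cong_funs:
  "univ S = univ S' \<Longrightarrow> rel S = rel S' \<Longrightarrow> \<forall>h\<in>form_funs \<phi>. fn S h = fn S' h \<Longrightarrow>
   sat_d S s \<phi> = sat_d S' s \<phi>"
proof (induction \<phi> arbitrary: S S' s)
  case (NumAt c i j)
  then show ?case using teval_cong_funs[of i "fn S" "fn S'"] teval_cong_funs[of j "fn S" "fn S'"]
    by simp
next
  case (NegNumAt c i j)
  then show ?case using teval_cong_funs[of i "fn S" "fn S'"] teval_cong_funs[of j "fn S" "fn S'"]
    by simp
next
  case (And \<phi> \<psi>)
  have "sat_d S s \<phi> = sat_d S' s \<phi>" "sat_d S s \<psi> = sat_d S' s \<psi>"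
    using And.prems by (intro And.IH; simp)+
  then show ?case by (simp only: sat_d.simps)
next
  case (Or \<phi> \<psi>)
  have "sat_d S s \<phi> = sat_d S' s \<phi>" "sat_d S s \<psi> = sat_d S' s \<psi>"
    using Or.prems by (intro Or.IH; simp)+
  then show ?case by (simp only: sat_d.simps)
next
  case (Ex x \<phi>)
  have "sat_d S s' \<phi> = sat_d S' s' \<phi>" for s'
    using Ex.prems by (intro Ex.IH; simp)
  then show ?case using Ex.prems(1) by (simp only: sat_d.simps)
next
  case (All x \<phi>)
  have "sat_d S s' \<phi> = sat_d S' s' \<phi>" for s'
    using All.prems by (intro All.IH; simp)
  then show ?case using All.prems(1) by (simp only: sat_d.simps)
next
  case (ExF g k \<phi>)
  have "sat_d (S\<lparr>fn := (fn S)(g := h)\<rparr>) s \<phi> = sat_d (S'\<lparr>fn := (fn S')(g := h)\<rparr>) s \<phi>" for h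
    using ExF.prems by (intro ExF.IH; simp)
  then show ?case using ExF.prems(1) by (simp only: sat_d.simps struc.select_convs struc.update_convs)
qed simp_all

lemma teval_upd_fresh:
  "y \<notin> term_vars t \<Longrightarrow> teval A F (s(y := a)) t = teval A F s t"
proof (induction t arbitrary: s)
  case (FApp g xs)
  then show ?case by (auto intro!: arg_cong[where f = "F g"])
next
  case (Sum ys t)
  have "upd (s(y := a)) ys as = (upd s ys as)(y := a)" for as
    using Sum.prems
    by (auto simp: upd_def fun_eq_iff split: option.splits dest: map_of_SomeD in_set_zipE)
  then have "teval A F (upd (s(y := a)) ys as) t = teval A F (upd s ys as) t" for as
    using Sum by (simp del: fun_upd_apply)
  then show ?case by (simp only: teval.simps)
qed auto

lemma teval_Sum_fresh:
  assumes "y \<notin> term_vars t"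
  shows "teval A F s (Sum [y] t) = real (card A) * teval A F s t"
proof -
  have "teval A F s (Sum [y] t) = (\<Sum>a\<in>A. teval A F (s(y := a)) t)"
    by (simp add: sum_tuples_Suc_0 upd_singleton)
  also have "\<dots> = real (card A) * teval A F s t"
    by (simp add: teval_upd_fresh[OF assms])
  finally show ?thesis .
qed

definition one_term :: "nat \<Rightarrow> nterm" where
  "one_term f = Sum [0] (FApp f [0])"

lemma teval_one_term:
  assumes "is_distr A 1 (F f)"
  shows "teval A F s (one_term f) = 1"
proof -
  have "teval A F s (one_term f) = (\<Sum>as\<in>tuples A 1. F f as)"
    by (simp add: one_term_def sum_tuples_Suc_0 upd_singleton)
  then show ?thesis using assms by (simp add: is_distr_def)
qed

primrec replace_consts :: "nat \<Rightarrow> nterm \<Rightarrow> nterm" where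
  "replace_consts f (Const c) = one_term f"
| "replace_consts f (FApp g xs) = FApp g xs"
| "replace_consts f (Plus i j) = Plus (replace_consts f i) (replace_consts f j)"
| "replace_consts f (Times i j) = Times (replace_consts f i) (replace_consts f j)"
| "replace_consts f (Sum ys t) = Sum ys (replace_consts f t)"

lemma teval_replace_consts:
  assumes "is_distr A 1 (F f)"
  shows "term_in Ops {1} t \<Longrightarrow> teval A F s (replace_consts f t) = teval A F s t"
  using teval_one_term[of A F f] assms by (induction t arbitrary: s) auto

primrec is_zero_term :: "nterm \<Rightarrow> bool" where
  "is_zero_term (Const c) = (c = 0)"
| "is_zero_term (FApp f xs) = False"
| "is_zero_term (Plus i j) = False"
| "is_zero_term (Times i j) = False"
| "is_zero_term (Sum ys t) = is_zero_term t"

lemma teval_zero_term: "is_zero_term t \<Longrightarrow> teval A F s t = 0"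
  by (induction t arbitrary: s) auto

lemma term_in_Sum_one: "term_in {OSum} {0, 1} t \<Longrightarrow> \<not> is_zero_term t \<Longrightarrow> term_in {OSum} {1} t"
  by (induction t) auto

definition zero_test :: "nterm \<Rightarrow> formula" where
  "zero_test t = NumAt CEq (Sum [fresh (term_vars t)] t) t"

lemma sat_d_zero_test:
  assumes "card (univ S) \<ge> 2"
  shows "sat_d S s (zero_test t) \<longleftrightarrow> teval (univ S) (fn S) s t = 0"
proof -
  let ?v = "teval (univ S) (fn S) s t"
  have "teval (univ S) (fn S) s (Sum [fresh (term_vars t)] t) = real (card (univ S)) * ?v"
    by (rule teval_Sum_fresh) (simp add: fresh_notin finite_term_vars)
  then have "sat_d S s (zero_test t) \<longleftrightarrow> real (card (univ S)) * ?v = ?v"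
    by (simp only: zero_test_def sat_d.simps cmp_sem.simps)
  also have "\<dots> \<longleftrightarrow> ?v = 0"
    using assms by (simp add: mult_cancel_right2)
  finally show ?thesis .
qed

definition elim_consts_atom :: "nat \<Rightarrow> nterm \<Rightarrow> nterm \<Rightarrow> formula" where
  "elim_consts_atom f i j =
     (if is_zero_term i \<and> is_zero_term j then Eq 0 0 \<comment> \<open>a tautology\<close>
      else if is_zero_term i then zero_test (replace_consts f j)
      else if is_zero_term j then zero_test (replace_consts f i)
      else NumAt CEq (replace_consts f i) (replace_consts f j))"

primrec elim_consts :: "nat \<Rightarrow> formula \<Rightarrow> formula" where
  "elim_consts f (Eq x y) = Eq x y"
| "elim_consts f (NEq x y) = NEq x y"
| "elim_consts f (NumAt c i j) = elim_consts_atom f i j"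
| "elim_consts f (NegNumAt c i j) = NegNumAt c i j" \<comment> \<open>does not occur in loose formulae\<close>
| "elim_consts f (Rel R xs) = Rel R xs"
| "elim_consts f (NRel R xs) = NRel R xs"
| "elim_consts f (And \<phi> \<psi>) = And (elim_consts f \<phi>) (elim_consts f \<psi>)"
| "elim_consts f (Or \<phi> \<psi>) = Or (elim_consts f \<phi>) (elim_consts f \<psi>)"
| "elim_consts f (Ex x \<phi>) = Ex x (elim_consts f \<phi>)"
| "elim_consts f (All x \<phi>) = All x (elim_consts f \<phi>)"
| "elim_consts f (ExF g k \<phi>) = ExF g k (elim_consts f \<phi>)"

lemma sat_d_elim_consts_atom:
  assumes "is_distr (univ S) 1 (fn S f)" "card (univ S) \<ge> 2"
    and "term_in {OSum} {0, 1} i" "term_in {OSum} {0, 1} j"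
  shows "sat_d S s (elim_consts_atom f i j) \<longleftrightarrow> teval (univ S) (fn S) s i = teval (univ S) (fn S) s j"
proof -
  have "\<not> is_zero_term t \<Longrightarrow>
      teval (univ S) (fn S) s (replace_consts f t) = teval (univ S) (fn S) s t"
    if "t \<in> {i, j}" for t
    using that assms(3,4) teval_replace_consts[of "univ S" "fn S" f, OF assms(1)] term_in_Sum_one
    by blast
  then show ?thesis
    using assms(2) by (auto simp: elim_consts_atom_def sat_d_zero_test teval_zero_term)
qed

lemma sat_d_elim_consts:
  "in_ESO {OSum} {CEq} {0, 1} \<phi> \<Longrightarrow> loose \<phi> \<Longrightarrow> f \<notin> form_funs \<phi> \<Longrightarrow>
   is_distr (univ S) 1 (fn S f) \<Longrightarrow> card (univ S) \<ge> 2 \<Longrightarrow>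
   sat_d S s (elim_consts f \<phi>) \<longleftrightarrow> sat_d S s \<phi>"
proof (induction \<phi> arbitrary: S s)
  case (NumAt c i j)
  then show ?case using sat_d_elim_consts_atom[of S f i j s] by auto
next
  case (ExF g k \<phi>)
  have "sat_d (S\<lparr>fn := (fn S)(g := h)\<rparr>) s (elim_consts f \<phi>) = sat_d (S\<lparr>fn := (fn S)(g := h)\<rparr>) s \<phi>"
    for h using ExF by (intro ExF.IH) auto
  then show ?case by simp
qed auto

lemma wf_term_replace_consts: "wf_term ar t \<Longrightarrow> ar f = Some 1 \<Longrightarrow> wf_term ar (replace_consts f t)"
  by (induction t) (auto simp: one_term_def)

lemma wf_term_upd_notin: "wf_term ar t \<Longrightarrow> f \<notin> term_funs t \<Longrightarrow> wf_term (ar(f := x)) t"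
  by (induction t) auto

lemma wf_form_elim_consts:
  "wf_form rv ar \<phi> \<Longrightarrow> f \<notin> form_funs \<phi> \<Longrightarrow> wf_form rv (ar(f := Some 1)) (elim_consts f \<phi>)"
proof (induction \<phi> arbitrary: ar)
  case (NumAt c i j)
  then have "wf_term (ar(f := Some 1)) i" "wf_term (ar(f := Some 1)) j"
    by (simp_all add: wf_term_upd_notin)
  then have "wf_term (ar(f := Some 1)) (replace_consts f i)"
    "wf_term (ar(f := Some 1)) (replace_consts f j)"
    by (simp_all add: wf_term_replace_consts)
  then show ?case by (simp add: elim_consts_atom_def zero_test_def del: fun_upd_apply)
next
  case (ExF g k \<phi>)
  have "wf_form rv ((ar(g := Some k))(f := Some 1)) (elim_consts f \<phi>)"
    by (rule ExF.IH) (use ExF.prems in \<open>simp_all del: fun_upd_apply\<close>)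
  moreover have "(ar(g := Some k))(f := Some 1) = (ar(f := Some 1))(g := Some k)"
    by (rule fun_upd_twist) (use ExF.prems in simp)
  ultimately show ?case by (simp del: fun_upd_apply)
qed (simp_all add: wf_term_upd_notin)

lemma term_in_replace_consts: "term_in {OSum} C t \<Longrightarrow> term_in {OSum} {} (replace_consts f t)"
  by (induction t) (auto simp: one_term_def)

lemma L_ESO_d_elim_consts:
  "L_ESO_d {OSum} {CEq} C \<phi> \<Longrightarrow> L_ESO_d {OSum} {CEq} {} (elim_consts f \<phi>)"
  by (induction \<phi>) (auto simp: L_ESO_d_def elim_consts_atom_def zero_test_def term_in_replace_consts)

lemma has_num_elim_consts: "has_num (elim_consts f \<phi>) \<Longrightarrow> has_num \<phi>"
  by (induction \<phi>) (auto simp: elim_consts_atom_def)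

lemma almost_conj_elim_consts: "almost_conj \<phi> \<Longrightarrow> almost_conj (elim_consts f \<phi>)"
  by (induction \<phi>) (auto simp: elim_consts_atom_def zero_test_def dest: has_num_elim_consts)

lemma qfree_elim_consts: "qfree (elim_consts f \<phi>) = qfree \<phi>"
  by (induction \<phi>) (auto simp: elim_consts_atom_def zero_test_def)

lemma univ_prenex_elim_consts: "univ_prenex (elim_consts f \<phi>) = univ_prenex \<phi>"
  by (induction \<phi>) (auto simp: elim_consts_atom_def zero_test_def qfree_elim_consts)

lemma ef_univ_prenex_elim_consts: "ef_univ_prenex (elim_consts f \<phi>) = ef_univ_prenex \<phi>"
  by (induction \<phi>) (auto simp: elim_consts_atom_def zero_test_def univ_prenex_elim_consts qfree_elim_consts)

definition drop_consts :: "formula \<Rightarrow> formula" where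
  "drop_consts \<phi> = (let f = fresh (form_funs \<phi>) in ExF f 1 (elim_consts f \<phi>))"

lemma Struc_R_drop_consts:
  assumes "L_ESO_d {OSum} {CEq} {0, 1} \<phi>"
  shows "Struc_R V (drop_consts \<phi>) = Struc_R V \<phi>"
proof -
  define f where "f = fresh (form_funs \<phi>)"
  have f: "f \<notin> form_funs \<phi>" by (simp add: f_def fresh_notin finite_form_funs)
  have "sat_d S s (drop_consts \<phi>) \<longleftrightarrow> sat_d S s \<phi>" if "is_struc V S" for S s
  proof -
    have fin: "finite (univ S)" and two: "card (univ S) \<ge> 2"
      using that by (auto simp: is_struc_def)
    have "sat_d S s (drop_consts \<phi>) \<longleftrightarrow>
        (\<exists>g. is_distr (univ S) 1 g \<and> sat_d (S\<lparr>fn := (fn S)(f := g)\<rparr>) s \<phi>)"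
      using sat_d_elim_consts[of \<phi> f] assms f two
      by (auto simp: drop_consts_def L_ESO_d_def simp flip: f_def)
    also have "\<dots> \<longleftrightarrow> (\<exists>g. is_distr (univ S) 1 g \<and> sat_d S s \<phi>)"
      using sat_d_cong_funs[of "S\<lparr>fn := (fn S)(f := g)\<rparr>" S \<phi> s for g] f by auto
    also have "\<dots> \<longleftrightarrow> sat_d S s \<phi>"
      using is_distr_exists[OF fin, of 1] two by fastforce
    finally show ?thesis .
  qed
  then show ?thesis by (auto simp: Struc_R_def)
qed

lemma wf_drop_consts: "wf V \<phi> \<Longrightarrow> wf V (drop_consts \<phi>)"
  unfolding wf_def drop_consts_def Let_def wf_form.simps
  by (rule wf_form_elim_consts) (simp_all add: fresh_notin finite_form_funs)

lemma L_ESO_d_drop_consts: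
  "L_ESO_d {OSum} {CEq} C \<phi> \<Longrightarrow> L_ESO_d {OSum} {CEq} {} (drop_consts \<phi>)"
  using L_ESO_d_elim_consts[of C \<phi>] by (simp add: drop_consts_def Let_def L_ESO_d_def)

lemma almost_conj_drop_consts: "almost_conj \<phi> \<Longrightarrow> almost_conj (drop_consts \<phi>)"
  by (simp add: drop_consts_def Let_def almost_conj_elim_consts)

lemma ef_univ_prenex_drop_consts: "ef_univ_prenex (drop_consts \<phi>) = ef_univ_prenex \<phi>"
  by (simp add: drop_consts_def Let_def ef_univ_prenex_elim_consts)

lemma leq_R_mono: "(\<And>\<phi>. L \<phi> \<Longrightarrow> L' \<phi>) \<Longrightarrow> leq_R L L'"
  unfolding leq_R_def by blast

lemma leq_R_translation:
  assumes "\<And>V \<phi>. wf V \<phi> \<Longrightarrow> L \<phi> \<Longrightarrow> wf V (T \<phi>) \<and> L' (T \<phi>) \<and> Struc_R V (T \<phi>) = Struc_R V \<phi>"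
  shows "leq_R L L'"
  unfolding leq_R_def using assms by metis

lemma term_in_mono_consts: "term_in Ops C t \<Longrightarrow> C \<subseteq> C' \<Longrightarrow> term_in Ops C' t"
  by (induction t) auto

lemma L_ESO_d_mono_consts: "L_ESO_d Ops E C \<phi> \<Longrightarrow> C \<subseteq> C' \<Longrightarrow> L_ESO_d Ops E C' \<phi>"
  by (induction \<phi>) (auto simp: L_ESO_d_def intro: term_in_mono_consts)

theorem mainTheorem7:
  shows "equiv_R (L_ESO_d {OSum} {CEq} {}) (L_ESO_d {OSum} {CEq} {0, 1})
    \<and> equiv_R (\<lambda>\<phi>. L_ESO_d {OSum} {CEq} {} \<phi> \<and> almost_conj \<phi> \<and> ef_univ_prenex \<phi>)
              (\<lambda>\<phi>. L_ESO_d {OSum} {CEq} {0, 1} \<phi> \<and> almost_conj \<phi> \<and> ef_univ_prenex \<phi>)"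
proof -
  have sub: "L_ESO_d {OSum} {CEq} {} \<phi> \<Longrightarrow> L_ESO_d {OSum} {CEq} {0, 1} \<phi>" for \<phi>
    by (rule L_ESO_d_mono_consts) auto
  have "leq_R (L_ESO_d {OSum} {CEq} {0, 1}) (L_ESO_d {OSum} {CEq} {})"
    by (rule leq_R_translation[where T = drop_consts])
      (simp add: wf_drop_consts Struc_R_drop_consts L_ESO_d_drop_consts)
  moreover have
    "leq_R (\<lambda>\<phi>. L_ESO_d {OSum} {CEq} {0, 1} \<phi> \<and> almost_conj \<phi> \<and> ef_univ_prenex \<phi>)
           (\<lambda>\<phi>. L_ESO_d {OSum} {CEq} {} \<phi> \<and> almost_conj \<phi> \<and> ef_univ_prenex \<phi>)"
    by (rule leq_R_translation[where T = drop_consts])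
      (auto simp: wf_drop_consts Struc_R_drop_consts L_ESO_d_drop_consts
        almost_conj_drop_consts ef_univ_prenex_drop_consts)
  ultimately show ?thesis
    unfolding equiv_R_def using sub by (auto intro: leq_R_mono)
qed

end
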